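(* The function $f:[0,1]^2\to\mathbb R$ defined by $$f(\beta_\ell,\beta_h)=\sum_{s'\in\{\ell,h\}}P(s')\sum_{r'\in\{\ell,h\}}\sigma(r'\mid s')\sum_{s\in\{\ell,h\}}P(s\mid s')\sum_{r\in\{\ell,h\}}\sigma(r\mid s)\,PS(r,P_{r'})$$ is convex on $[0,1]^2$. Here $\sigma=(\beta_\ell,\beta_h)$, with $\sigma(h\mid \ell)=\beta_\ell$, $\sigma(\ell\mid\ell)=1-\beta_\ell$, $\sigma(h\mid h)=\beta_h$ and $\sigma(\ell\mid h)=1-\beta_h$.
   Context: Peer prediction setting with signals $\{\ell,h\}$ and a symmetric common prior. $P(s)>0$ is the marginal probability of signal $s$. $P(s\mid s')$ is the probability that another agent has signal $s$ given that one's own signal is $s'$, and $P_{s'}=P(\cdot\mid s')$. Standing assumptions: $P(h\mid h)>P(h\mid\ell)$, $P(h\mid\ell)>0$ and $P(\ell\mid h)>0$. $PS$ is a strictly proper scoring rule on $\{\ell,h\}$, i.e. $\mathbb E_{s\sim p}[PS(s,p)]>\mathbb E_{s\sim p}[PS(s,q)]$ for all $p\ne q$. The quantity $f(\beta_\ell,\beta_h)$ is the expected reward of an agent from one peer when both play the strategy $(\beta_\ell,\beta_h)$. *)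

theory Defs
  imports "HOL-Analysis.Analysis"
begin

text \<open>Signals/reports: L = low (ell), H = high (h).\<close>
datatype signal = L | H

definition signals :: "signal set" where "signals = {L, H}"

text \<open>A symmetric common prior is given by a joint distribution J s s' (probability
  that one agent has signal s and the other has s').\<close>
definition sym_prior :: "(signal \<Rightarrow> signal \<Rightarrow> real) \<Rightarrow> bool" where
  "sym_prior J \<longleftrightarrow> (\<forall>s s'. J s s' \<ge> 0) \<and> (\<Sum>s\<in>signals. \<Sum>s'\<in>signals. J s s') = 1
     \<and> (\<forall>s s'. J s s' = J s' s)"

definition marg :: "(signal \<Rightarrow> signal \<Rightarrow> real) \<Rightarrow> signal \<Rightarrow> real" where
  "marg J s = (\<Sum>s'\<in>signals. J s s')"

text \<open>Conditional P(s | s'): probability the other agent has s given one's own signal s'.\<close>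
definition cond :: "(signal \<Rightarrow> signal \<Rightarrow> real) \<Rightarrow> signal \<Rightarrow> signal \<Rightarrow> real" where
  "cond J s s' = J s s' / marg J s'"

definition is_dist :: "(signal \<Rightarrow> real) \<Rightarrow> bool" where
  "is_dist p \<longleftrightarrow> (\<forall>s. p s \<ge> 0) \<and> (\<Sum>s\<in>signals. p s) = 1"

definition strictly_proper :: "(signal \<Rightarrow> (signal \<Rightarrow> real) \<Rightarrow> real) \<Rightarrow> bool" where
  "strictly_proper PS \<longleftrightarrow> (\<forall>p q. is_dist p \<longrightarrow> is_dist q \<longrightarrow> p \<noteq> q \<longrightarrow>
      (\<Sum>s\<in>signals. p s * PS s p) > (\<Sum>s\<in>signals. p s * PS s q))"

definition strat :: "real \<Rightarrow> real \<Rightarrow> signal \<Rightarrow> signal \<Rightarrow> real" where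
  "strat bl bh r s = (case s of
      L \<Rightarrow> (case r of H \<Rightarrow> bl | L \<Rightarrow> 1 - bl)
    | H \<Rightarrow> (case r of H \<Rightarrow> bh | L \<Rightarrow> 1 - bh))"

definition reward ::
  "(signal \<Rightarrow> signal \<Rightarrow> real) \<Rightarrow> (signal \<Rightarrow> (signal \<Rightarrow> real) \<Rightarrow> real) \<Rightarrow> real \<Rightarrow> real \<Rightarrow> real" where
  "reward J PS bl bh =
     (\<Sum>s'\<in>signals. marg J s' * (\<Sum>r'\<in>signals. strat bl bh r' s' *
        (\<Sum>s\<in>signals. cond J s s' * (\<Sum>r\<in>signals. strat bl bh r s * PS r (\<lambda>t. cond J t r')))))"

end

theory Submission
  imports Defs
begin

text \<open>Expanding both reports bilinearly, the reward is an affine function of the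
  strategy (bl, bh) plus K times the quadratic form of the joint prior J at (bl, bh), where K
  is the score interaction below. The prior matrix is positive definite because the signals
  are positively correlated, and K > 0 because strict properness, applied to the two posteriors
  in both directions, gives (P(h|h) - P(h|l)) K > 0. So the reward is a convex quadratic.\<close>

definition score_interaction ::
  "(signal \<Rightarrow> signal \<Rightarrow> real) \<Rightarrow> (signal \<Rightarrow> (signal \<Rightarrow> real) \<Rightarrow> real) \<Rightarrow> real" where
  "score_interaction J PS =
     PS H (\<lambda>t. cond J t H) - PS H (\<lambda>t. cond J t L) - PS L (\<lambda>t. cond J t H) + PS L (\<lambda>t. cond J t L)"

lemma quadratic_form_nonneg:
  fixes a b c x y :: real
  assumes "a \<ge> 0" "c \<ge> 0" "b\<^sup>2 \<le> a * c"
  shows "a * x\<^sup>2 + 2 * b * x * y + c * y\<^sup>2 \<ge> 0"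
proof (cases "a = 0")
  case True
  then have "b = 0" using assms(3) by simp
  then show ?thesis using True assms(2) by simp
next
  case False
  then have "a > 0" using assms(1) by simp
  have "a * (a * x\<^sup>2 + 2 * b * x * y + c * y\<^sup>2) = (a * x + b * y)\<^sup>2 + (a * c - b\<^sup>2) * y\<^sup>2"
    by (simp add: power2_eq_square algebra_simps)
  also have "\<dots> \<ge> 0" using assms(3) by simp
  finally show ?thesis using \<open>a > 0\<close> by (simp add: zero_le_mult_iff)
qed

lemma convex_on_quadratic:
  fixes a b c e f g K :: real
  assumes "convex S" "K \<ge> 0" "a \<ge> 0" "c \<ge> 0" "b\<^sup>2 \<le> a * c"
  shows "convex_on S (\<lambda>(x, y). e + f * x + g * y + K * (a * x\<^sup>2 + 2 * b * x * y + c * y\<^sup>2))"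
    (is "convex_on S ?F")
proof (rule convex_onI)
  fix t :: real and u v :: "real \<times> real"
  assume t: "0 < t" "t < 1"
  obtain x1 y1 where u: "u = (x1, y1)" by (cases u)
  obtain x2 y2 where v: "v = (x2, y2)" by (cases v)
  have "(1 - t) * ?F u + t * ?F v - ?F ((1 - t) *\<^sub>R u + t *\<^sub>R v)
      = t * (1 - t) * K * (a * (x1 - x2)\<^sup>2 + 2 * b * (x1 - x2) * (y1 - y2) + c * (y1 - y2)\<^sup>2)"
    by (simp add: u v power2_eq_square algebra_simps)
  also have "\<dots> \<ge> 0"
    using t assms(2) quadratic_form_nonneg[OF assms(3-5)] by simp
  finally show "?F ((1 - t) *\<^sub>R u + t *\<^sub>R v) \<le> (1 - t) * ?F u + t * ?F v" by simp
qed (rule assms(1))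

lemma sum_signals: "(\<Sum>s\<in>signals. h s) = h L + h H"
  by (simp add: signals_def)

lemma is_dist_cond:
  assumes "sym_prior J" "marg J s > 0"
  shows "is_dist (\<lambda>t. cond J t s)"
proof -
  have "(\<Sum>t\<in>signals. J t s) = marg J s"
    using assms(1) by (simp add: sym_prior_def marg_def sum_signals)
  then have "(\<Sum>t\<in>signals. cond J t s) = 1"
    using assms(2) by (simp add: cond_def sum_divide_distrib[symmetric])
  moreover have "cond J t s \<ge> 0" for t
    using assms by (simp add: sym_prior_def cond_def)
  ultimately show ?thesis by (simp add: is_dist_def)
qed

lemma strictly_proper_interaction_pos:
  assumes "strictly_proper PS" "is_dist p" "is_dist q" "p H > q H"
  shows "PS H p - PS H q - PS L p + PS L q > 0"
proof -
  have "p \<noteq> q" using assms(4) by auto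
  then have "(\<Sum>s\<in>signals. p s * PS s q) < (\<Sum>s\<in>signals. p s * PS s p)"
    and "(\<Sum>s\<in>signals. q s * PS s p) < (\<Sum>s\<in>signals. q s * PS s q)"
    using assms(1-3) unfolding strictly_proper_def by blast+
  moreover have "p L = 1 - p H" "q L = 1 - q H"
    using assms(2,3) by (simp_all add: is_dist_def sum_signals)
  ultimately have "0 < (p H - q H) * (PS H p - PS H q - PS L p + PS L q)"
    by (simp add: sum_signals algebra_simps)
  then show ?thesis using assms(4) by (simp add: zero_less_mult_iff)
qed

lemma sym_prior_det_pos:
  assumes "sym_prior J" "\<And>s. marg J s > 0" "cond J H H > cond J H L"
  shows "(J L H)\<^sup>2 < J L L * J H H"
proof -
  have JHL: "J H L = J L H" using assms(1) by (simp add: sym_prior_def)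
  have "J H H / (J L H + J H H) > J L H / (J L L + J L H)"
    using assms(3) by (simp add: cond_def marg_def sum_signals JHL)
  moreover have "J L H + J H H > 0" "J L L + J L H > 0"
    using assms(2)[of H] assms(2)[of L] by (simp_all add: marg_def sum_signals JHL)
  ultimately have "J L H * (J L H + J H H) < J H H * (J L L + J L H)"
    by (simp add: field_simps)
  then show ?thesis by (simp add: power2_eq_square algebra_simps)
qed

lemma reward_quadratic:
  assumes "\<And>s. marg J s \<noteq> 0" "J H L = J L H"
  obtains e f g where "\<And>bl bh. reward J PS bl bh = e + f * bl + g * bh
    + score_interaction J PS * (J L L * bl\<^sup>2 + 2 * J L H * bl * bh + J H H * bh\<^sup>2)"
proof -
  define M where "M r r' = PS r (\<lambda>t. cond J t r')" for r r'
  have "reward J PS bl bh =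
      (M L L + bl * (M H L - M L L) + bl * (M L H - M L L)) * J L L
    + (M L L + bh * (M H L - M L L) + bl * (M L H - M L L)) * J L H
    + (M L L + bl * (M H L - M L L) + bh * (M L H - M L L)) * J L H
    + (M L L + bh * (M H L - M L L) + bh * (M L H - M L L)) * J H H
    + score_interaction J PS * (J L L * bl\<^sup>2 + 2 * J L H * bl * bh + J H H * bh\<^sup>2)" for bl bh
    unfolding reward_def score_interaction_def
    by (simp only: sum_signals strat_def signal.case M_def[symmetric])
      (simp add: cond_def assms field_simps power2_eq_square)
  then show thesis
    by (intro that[of "M L L * (J L L + 2 * J L H + J H H)"
          "(M H L + M L H - 2 * M L L) * (J L L + J L H)"
          "(M H L + M L H - 2 * M L L) * (J L H + J H H)"])
      (simp add: algebra_simps)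
qed

theorem mainTheorem9:
  fixes J :: "signal \<Rightarrow> signal \<Rightarrow> real"
    and PS :: "signal \<Rightarrow> (signal \<Rightarrow> real) \<Rightarrow> real"
  assumes "sym_prior J"
    and "\<And>s. marg J s > 0"
    and "cond J H H > cond J H L"
    and "cond J H L > 0"
    and "cond J L H > 0"
    and "strictly_proper PS"
  shows "convex_on ({0..1} \<times> {0..1}) (\<lambda>(bl, bh). reward J PS bl bh)"
proof -
  have J_sym: "J H L = J L H" and J_nonneg: "J L L \<ge> 0" "J H H \<ge> 0"
    using assms(1) by (simp_all add: sym_prior_def)
  obtain e f g where reward_eq: "\<And>bl bh. reward J PS bl bh = e + f * bl + g * bh
      + score_interaction J PS * (J L L * bl\<^sup>2 + 2 * J L H * bl * bh + J H H * bh\<^sup>2)"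
    using reward_quadratic[OF _ J_sym] assms(2) by (metis less_irrefl)
  have "score_interaction J PS > 0"
    unfolding score_interaction_def
    using strictly_proper_interaction_pos[OF assms(6) is_dist_cond is_dist_cond assms(3)]
      assms(1,2) by blast
  moreover have "(J L H)\<^sup>2 \<le> J L L * J H H"
    using sym_prior_det_pos[OF assms(1-3)] by simp
  ultimately have "convex_on ({0..1} \<times> {0..1})
      (\<lambda>(bl, bh). e + f * bl + g * bh
        + score_interaction J PS * (J L L * bl\<^sup>2 + 2 * J L H * bl * bh + J H H * bh\<^sup>2))"
    by (intro convex_on_quadratic convex_Times convex_real_interval J_nonneg) simp_all
  then show ?thesis by (simp add: reward_eq)
qed

end
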